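(* Let $\Delta \ge 3$ and $q\ge 2$ be integers, let $\alpha = \frac{1}{1000 \log (q\Delta)}$ and $g_\alpha(k) = \sum_{i=0}^{k-1} q^{\alpha i} = \frac{q^{\alpha k}-1}{q^\alpha-1}$. Then $$\beta(\alpha) := \sum_{k=1}^{\Delta} \binom{\Delta}{k} \frac{(2\Delta-1)^{(\Delta-k)(1-\alpha)}}{(2\Delta)^{\Delta(1-\alpha)}}\, g_\alpha(k+1) < 1.$$
   Context: $\log$ denotes the natural logarithm. *)

theory Defs
  imports Complex_Main
begin

definition g_alpha :: "real \<Rightarrow> nat \<Rightarrow> nat \<Rightarrow> real" where
  "g_alpha \<alpha> q k = (\<Sum>i<k. (real q) powr (\<alpha> * real i))"

definition beta :: "nat \<Rightarrow> nat \<Rightarrow> real \<Rightarrow> real" where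
  "beta q \<Delta> \<alpha> = (\<Sum>k=1..\<Delta>. real (\<Delta> choose k) *
      ((2 * real \<Delta> - 1) powr (real (\<Delta> - k) * (1 - \<alpha>))
       / (2 * real \<Delta>) powr (real \<Delta> * (1 - \<alpha>)))
      * g_alpha \<alpha> q (k + 1))"

end

theory Submission
  imports Defs
begin

text \<open>Write x = 2\<Delta> - 1, y = 2\<Delta>, r = (x q) powr \<alpha> and E = (y / x) powr (\<Delta> \<alpha>).
  Bounding g_alpha \<alpha> q (k + 1) by (k + 1) q powr (\<alpha> k) and pulling out the integral
  powers, the k-th summand of beta is at most E (\<Delta> choose k) (k + 1) x^(\<Delta> - k) r^k / y^\<Delta>.
  Summed over 0 \<le> k \<le> \<Delta> these give (x + r)^\<Delta> + \<Delta> r (x + r)^(\<Delta> - 1), and the missing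
  term k = 0 is x^\<Delta>. As \<alpha> ln (q \<Delta>) = 1/1000, both E and r lie within 1/250 of 1; at
  E = r = 1 the bound is 3/2 - (1 - 1/(2\<Delta>))^\<Delta>, and (1 - 1/(2\<Delta>))^\<Delta> \<ge> exp (-3/5) > 0.53
  for \<Delta> \<ge> 3.\<close>

lemma sum_binomial_times_index:
  fixes x r :: "'a::comm_semiring_1"
  shows "(\<Sum>k\<le>n. of_nat k * of_nat (n choose k) * x ^ (n - k) * r ^ k)
         = of_nat n * r * (x + r) ^ (n - 1)"
proof (cases n)
  case 0
  then show ?thesis by simp
next
  case (Suc m)
  have "(\<Sum>k\<le>n. of_nat k * of_nat (n choose k) * x ^ (n - k) * r ^ k)
      = (\<Sum>j\<le>m. of_nat (Suc j) * of_nat (Suc m choose Suc j) * x ^ (m - j) * r ^ Suc j)"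
    unfolding Suc by (subst sum.atMost_Suc_shift) simp
  also have "\<dots> = (\<Sum>j\<le>m. of_nat n * r * (of_nat (m choose j) * r ^ j * x ^ (m - j)))"
  proof (rule sum.cong [OF refl])
    fix j
    have "of_nat (Suc j) * of_nat (Suc m choose Suc j) = (of_nat n * of_nat (m choose j) :: 'a)"
      unfolding Suc of_nat_mult [symmetric] by (rule arg_cong [OF Suc_times_binomial])
    then show "of_nat (Suc j) * of_nat (Suc m choose Suc j) * x ^ (m - j) * r ^ Suc j
        = of_nat n * r * (of_nat (m choose j) * r ^ j * x ^ (m - j))"
      by (simp add: algebra_simps)
  qed
  also have "\<dots> = of_nat n * r * (x + r) ^ (n - 1)"
    by (simp add: Suc binomial_ring sum_distrib_left add.commute)
  finally show ?thesis .
qed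

lemma sum_binomial_times_Suc_index:
  fixes x r :: "'a::comm_semiring_1"
  shows "(\<Sum>k\<le>n. of_nat (Suc k) * of_nat (n choose k) * x ^ (n - k) * r ^ k)
         = (x + r) ^ n + of_nat n * r * (x + r) ^ (n - 1)"
proof -
  have "(\<Sum>k\<le>n. of_nat (Suc k) * of_nat (n choose k) * x ^ (n - k) * r ^ k)
      = (\<Sum>k\<le>n. of_nat (n choose k) * x ^ (n - k) * r ^ k)
        + (\<Sum>k\<le>n. of_nat k * of_nat (n choose k) * x ^ (n - k) * r ^ k)"
    by (simp add: sum.distrib [symmetric] algebra_simps)
  also have "(\<Sum>k\<le>n. of_nat (n choose k) * x ^ (n - k) * r ^ k) = (x + r) ^ n"
    by (simp add: binomial_ring add.commute mult_ac)
  finally show ?thesis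
    by (simp only: sum_binomial_times_index)
qed

lemma g_alpha_Suc_le:
  assumes "0 \<le> \<alpha>" and "1 \<le> q"
  shows "g_alpha \<alpha> q (Suc k) \<le> real (Suc k) * real q powr (\<alpha> * real k)"
proof -
  have "g_alpha \<alpha> q (Suc k) \<le> (\<Sum>i<Suc k. real q powr (\<alpha> * real k))"
    unfolding g_alpha_def
    by (intro sum_mono powr_mono mult_left_mono) (use assms in auto)
  then show ?thesis by simp
qed

lemma powr_extract_powers:
  fixes x y c a :: real
  assumes "0 < x" "0 < y" "0 < c" "k \<le> n"
  shows "x powr (real (n - k) * (1 - a)) / y powr (real n * (1 - a)) * c powr (a * real k)
       = (y / x) powr (real n * a) * (x ^ (n - k) * ((x * c) powr a) ^ k) / y ^ n"
proof -
  have "x powr (real (n - k) * (1 - a)) = x ^ (n - k) * x powr (a * real k) / x powr (real n * a)"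
  proof -
    have "real (n - k) * (1 - a) = real (n - k) + a * real k - real n * a"
      using assms(4) by (simp add: of_nat_diff algebra_simps)
    then show ?thesis
      using assms(1) by (simp add: powr_add powr_diff powr_realpow)
  qed
  moreover have "y powr (real n * (1 - a)) = y ^ n / y powr (real n * a)"
    using assms(2) by (simp add: right_diff_distrib powr_diff powr_realpow)
  moreover have "((x * c) powr a) ^ k = x powr (a * real k) * c powr (a * real k)"
    using assms(1,3) by (simp add: powr_mult power_mult_distrib powr_power mult.commute)
  ultimately show ?thesis
    using assms(1,2) by (simp add: powr_divide field_simps)
qed

lemma beta_summand_le:
  fixes q \<Delta> k :: nat and \<alpha> :: real
  assumes "1 \<le> \<Delta>" "1 \<le> q" "0 \<le> \<alpha>" "k \<le> \<Delta>"
  defines "x \<equiv> 2 * real \<Delta> - 1" and "y \<equiv> 2 * real \<Delta>" and "r \<equiv> ((2 * real \<Delta> - 1) * real q) powr \<alpha>"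
  shows "real (\<Delta> choose k) * (x powr (real (\<Delta> - k) * (1 - \<alpha>)) / y powr (real \<Delta> * (1 - \<alpha>)))
           * g_alpha \<alpha> q (k + 1)
         \<le> (y / x) powr (real \<Delta> * \<alpha>)
           * (real (Suc k) * real (\<Delta> choose k) * x ^ (\<Delta> - k) * r ^ k) / y ^ \<Delta>"
proof -
  let ?P = "x powr (real (\<Delta> - k) * (1 - \<alpha>)) / y powr (real \<Delta> * (1 - \<alpha>))"
  have "0 < x" "0 < y" "0 < real q"
    using assms(1,2) by (auto simp: x_def y_def)
  have "?P * g_alpha \<alpha> q (k + 1) \<le> ?P * (real (Suc k) * real q powr (\<alpha> * real k))"
    using g_alpha_Suc_le [OF assms(3,2)] by (intro mult_left_mono) auto
  also have "\<dots> = real (Suc k) * (?P * real q powr (\<alpha> * real k))"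
    by simp
  also have "?P * real q powr (\<alpha> * real k) = (y / x) powr (real \<Delta> * \<alpha>) * (x ^ (\<Delta> - k) * r ^ k) / y ^ \<Delta>"
    unfolding r_def x_def [symmetric]
    by (rule powr_extract_powers [OF \<open>0 < x\<close> \<open>0 < y\<close> \<open>0 < real q\<close> assms(4)])
  finally have "?P * g_alpha \<alpha> q (k + 1)
      \<le> (y / x) powr (real \<Delta> * \<alpha>) * (real (Suc k) * x ^ (\<Delta> - k) * r ^ k) / y ^ \<Delta>"
    by (simp add: mult_ac)
  from mult_left_mono [OF this, of "real (\<Delta> choose k)"] show ?thesis
    by (simp add: mult_ac)
qed

lemma beta_le_binomial_bound:
  fixes q \<Delta> :: nat and \<alpha> :: real
  assumes "1 \<le> \<Delta>" "1 \<le> q" "0 \<le> \<alpha>"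
  defines "x \<equiv> 2 * real \<Delta> - 1" and "y \<equiv> 2 * real \<Delta>" and "r \<equiv> ((2 * real \<Delta> - 1) * real q) powr \<alpha>"
  shows "beta q \<Delta> \<alpha> \<le> (y / x) powr (real \<Delta> * \<alpha>)
           * (((x + r) ^ \<Delta> + real \<Delta> * r * (x + r) ^ (\<Delta> - 1) - x ^ \<Delta>) / y ^ \<Delta>)"
proof -
  define T where "T k = real (Suc k) * real (\<Delta> choose k) * x ^ (\<Delta> - k) * r ^ k" for k
  have "beta q \<Delta> \<alpha> \<le> (\<Sum>k=1..\<Delta>. (y / x) powr (real \<Delta> * \<alpha>) * T k / y ^ \<Delta>)"
    unfolding beta_def T_def x_def [symmetric] y_def [symmetric]
    by (intro sum_mono) (use beta_summand_le [OF assms(1-3)] in \<open>simp add: x_def y_def r_def\<close>)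
  also have "\<dots> = (y / x) powr (real \<Delta> * \<alpha>) * ((\<Sum>k=1..\<Delta>. T k) / y ^ \<Delta>)"
    by (simp add: sum_distrib_left sum_divide_distrib)
  also have "(\<Sum>k=1..\<Delta>. T k) = (\<Sum>k\<le>\<Delta>. T k) - x ^ \<Delta>"
    by (simp add: atMost_atLeast0 sum.atLeast_Suc_atMost T_def)
  also have "(\<Sum>k\<le>\<Delta>. T k) = (x + r) ^ \<Delta> + real \<Delta> * r * (x + r) ^ (\<Delta> - 1)"
    unfolding T_def by (rule sum_binomial_times_Suc_index)
  finally show ?thesis .
qed

lemma mult_ln_ratio_le:
  fixes d :: real
  assumes "3 \<le> d"
  shows "d * ln (2 * d / (2 * d - 1)) \<le> 3 / 5"
proof -
  have "ln (2 * d / (2 * d - 1)) \<le> 1 / (2 * d - 1)"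
    using ln_le_minus_one [of "2 * d / (2 * d - 1)"] assms by (simp add: field_simps)
  then have "d * ln (2 * d / (2 * d - 1)) \<le> d / (2 * d - 1)"
    using mult_left_mono [of _ _ d] assms by fastforce
  also have "\<dots> \<le> 3 / 5"
    using assms by (simp add: field_simps)
  finally show ?thesis .
qed

lemma ratio_powr_le:
  fixes \<Delta> :: nat and \<alpha> :: real
  assumes "3 \<le> \<Delta>" "0 \<le> \<alpha>" "\<alpha> \<le> 1 / 1000"
  shows "(2 * real \<Delta> / (2 * real \<Delta> - 1)) powr (real \<Delta> * \<alpha>) \<le> 1 + 1 / 500"
proof -
  let ?t = "\<alpha> * (real \<Delta> * ln (2 * real \<Delta> / (2 * real \<Delta> - 1)))"
  have "0 \<le> ?t"
    using assms by simp
  moreover have "?t \<le> \<alpha> * (3 / 5)"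
    using mult_ln_ratio_le [of "real \<Delta>"] assms by (intro mult_left_mono) auto
  ultimately have "exp ?t \<le> 1 + 2 * ?t" and "2 * ?t \<le> 1 / 500"
    using assms(3) by (auto intro: real_exp_bound_lemma)
  moreover have "(2 * real \<Delta> / (2 * real \<Delta> - 1)) powr (real \<Delta> * \<alpha>) = exp ?t"
    using assms(1) by (simp add: powr_def mult_ac)
  ultimately show ?thesis
    by linarith
qed

lemma ratio_power_ge:
  fixes \<Delta> :: nat
  assumes "3 \<le> \<Delta>"
  shows "53 / 100 \<le> ((2 * real \<Delta> - 1) / (2 * real \<Delta>)) ^ \<Delta>"
proof -
  have "53 / 100 \<le> (47 / 50 :: real) ^ 10"
    by (simp add: power_divide)
  also have "\<dots> \<le> exp (- 3 / 50) ^ 10"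
    using exp_ge_add_one_self [of "- 3 / 50"] by (intro power_mono) auto
  also have "\<dots> = exp (- (3 / 5))"
    by (simp flip: exp_of_nat_mult)
  also have "\<dots> \<le> exp (- (real \<Delta> * ln (2 * real \<Delta> / (2 * real \<Delta> - 1))))"
    using mult_ln_ratio_le [of "real \<Delta>"] assms by simp
  also have "\<dots> = exp (real \<Delta> * ln ((2 * real \<Delta> - 1) / (2 * real \<Delta>)))"
    using assms by (simp add: ln_div algebra_simps)
  also have "\<dots> = ((2 * real \<Delta> - 1) / (2 * real \<Delta>)) ^ \<Delta>"
    using assms by (simp add: exp_of_nat_mult)
  finally show ?thesis .
qed

lemma base_powr_bounds:
  fixes q \<Delta> :: nat and \<alpha> :: real
  assumes "1 \<le> \<Delta>" "1 \<le> q" "0 \<le> \<alpha>" "\<alpha> * ln (real q * real \<Delta>) \<le> 1 / 1000"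
  shows "1 \<le> ((2 * real \<Delta> - 1) * real q) powr \<alpha>"
    and "((2 * real \<Delta> - 1) * real q) powr \<alpha> \<le> 1 + 1 / 250"
proof -
  let ?z = "(2 * real \<Delta> - 1) * real q"
  have "1 * 1 \<le> ?z"
    using assms(1,2) by (intro mult_mono) auto
  then have "1 \<le> ?z"
    by simp
  then show "1 \<le> ?z powr \<alpha>"
    using assms(3) by (rule ge_one_powr_ge_zero)
  have "2 * real \<Delta> - 1 \<le> real \<Delta> ^ 2"
    using zero_le_power2 [of "real \<Delta> - 1"] by (simp add: power2_diff)
  moreover have "real q \<le> real q ^ 2"
    using assms(2) by (simp add: power2_eq_square)
  ultimately have "?z \<le> real \<Delta> ^ 2 * real q ^ 2"
    using assms(1) by (intro mult_mono) auto
  then have "?z \<le> (real q * real \<Delta>) ^ 2"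
    by (simp add: power_mult_distrib mult.commute)
  then have "ln ?z \<le> 2 * ln (real q * real \<Delta>)"
    using \<open>1 \<le> ?z\<close> assms(1,2) by (auto dest: ln_mono simp: ln_realpow)
  then have "\<alpha> * ln ?z \<le> \<alpha> * (2 * ln (real q * real \<Delta>))"
    using assms(3) by (rule mult_left_mono)
  also have "\<dots> \<le> 1 / 500"
    using assms(4) by simp
  finally have "exp (\<alpha> * ln ?z) \<le> 1 + 2 * (\<alpha> * ln ?z)" and "\<alpha> * ln ?z \<le> 1 / 500"
    using \<open>1 \<le> ?z\<close> assms(3) by (auto intro: real_exp_bound_lemma)
  then show "?z powr \<alpha> \<le> 1 + 1 / 250"
    using \<open>1 \<le> ?z\<close> by (simp add: powr_def)
qed

lemma binomial_bracket_less:
  fixes \<Delta> :: nat and r :: real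
  assumes "3 \<le> \<Delta>" "1 \<le> r" "r \<le> 1 + 1 / 250"
  defines "x \<equiv> 2 * real \<Delta> - 1" and "y \<equiv> 2 * real \<Delta>"
  shows "((x + r) ^ \<Delta> + real \<Delta> * r * (x + r) ^ (\<Delta> - 1) - x ^ \<Delta>) / y ^ \<Delta> < 49 / 50"
proof -
  have "0 < x" "0 < y"
    using assms(1) by (auto simp: x_def y_def)
  have "((x + r) / y) ^ (\<Delta> - 1) \<le> exp ((r - 1) / y) ^ (\<Delta> - 1)"
  proof -
    have "(x + r) / y = 1 + (r - 1) / y"
      using \<open>0 < y\<close> by (simp add: x_def y_def field_simps)
    then show ?thesis
      using \<open>0 < x\<close> \<open>0 < y\<close> assms(2) by (intro power_mono) auto
  qed
  also have "\<dots> = exp (real (\<Delta> - 1) / y * (r - 1))"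
    by (simp flip: exp_of_nat_mult)
  also have "\<dots> \<le> exp ((r - 1) / 2)"
  proof -
    have "real (\<Delta> - 1) / y \<le> 1 / 2"
      using assms(1) by (simp add: y_def of_nat_diff field_simps)
    from mult_right_mono [OF this, of "r - 1"] show ?thesis
      using assms(2) by simp
  qed
  also have "\<dots> \<le> 1 + 2 * ((r - 1) / 2)"
    using assms(2,3) by (intro real_exp_bound_lemma) auto
  also have "\<dots> \<le> 1 + 1 / 250"
    using assms(3) by simp
  finally have u: "((x + r) / y) ^ (\<Delta> - 1) \<le> 1 + 1 / 250" .
  have v: "(x + r + real \<Delta> * r) / y \<le> 1503 / 1000"
    using mult_right_mono [OF assms(3), of "1 + real \<Delta>"] assms(1) \<open>0 < y\<close>
    by (simp add: x_def y_def field_simps)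
  have w: "53 / 100 \<le> (x / y) ^ \<Delta>"
    unfolding x_def y_def by (rule ratio_power_ge [OF assms(1)])
  have "((x + r) ^ \<Delta> + real \<Delta> * r * (x + r) ^ (\<Delta> - 1) - x ^ \<Delta>) / y ^ \<Delta>
      = ((x + r) / y) ^ (\<Delta> - 1) * ((x + r + real \<Delta> * r) / y) - (x / y) ^ \<Delta>"
  proof -
    have "(x + r) ^ \<Delta> = (x + r) ^ (\<Delta> - 1) * (x + r)" "y ^ \<Delta> = y ^ (\<Delta> - 1) * y"
      using assms(1) by (simp_all flip: power_minus_mult)
    then show ?thesis
      using \<open>0 < y\<close> by (simp add: field_simps)
  qed
  also have "\<dots> \<le> (1 + 1 / 250) * (1503 / 1000) - 53 / 100"
    using u v w \<open>0 < x\<close> \<open>0 < y\<close> assms(2) by (intro diff_mono mult_mono) auto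
  also have "\<dots> < 49 / 50"
    by simp
  finally show ?thesis .
qed

theorem proposition4p15:
  fixes q \<Delta> :: nat and \<alpha> :: real
  assumes "\<Delta> \<ge> 3" and "q \<ge> 2"
    and "\<alpha> = 1 / (1000 * ln (real q * real \<Delta>))"
  shows "beta q \<Delta> \<alpha> < 1"
proof -
  define x y where "x = 2 * real \<Delta> - 1" and "y = 2 * real \<Delta>"
  define r where "r = (x * real q) powr \<alpha>"
  define E where "E = (y / x) powr (real \<Delta> * \<alpha>)"
  define B where "B = ((x + r) ^ \<Delta> + real \<Delta> * r * (x + r) ^ (\<Delta> - 1) - x ^ \<Delta>) / y ^ \<Delta>"
  have "exp 1 \<le> real q * real \<Delta>"
    using exp_le mult_mono [of 2 "real q" 3 "real \<Delta>"] assms(1,2) by simp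
  then have "1 \<le> ln (real q * real \<Delta>)"
    using ln_ge_iff [of "real q * real \<Delta>" 1] assms(1,2) by simp
  then have "0 < \<alpha>" "\<alpha> \<le> 1 / 1000" "\<alpha> * ln (real q * real \<Delta>) = 1 / 1000"
    unfolding assms(3) by (simp_all add: field_simps)
  then have "1 \<le> r" "r \<le> 1 + 1 / 250"
    using base_powr_bounds [of \<Delta> q \<alpha>] assms(1,2) by (simp_all add: r_def x_def)
  then have "B < 49 / 50"
    unfolding B_def x_def y_def using binomial_bracket_less assms(1) by blast
  have "beta q \<Delta> \<alpha> \<le> E * B"
    using beta_le_binomial_bound [of \<Delta> q \<alpha>] assms(1,2) \<open>0 < \<alpha>\<close>
    by (simp add: E_def B_def r_def x_def y_def)
  also have "\<dots> \<le> E * (49 / 50)"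
    using \<open>B < 49 / 50\<close> by (intro mult_left_mono) (auto simp: E_def)
  also have "\<dots> \<le> (1 + 1 / 500) * (49 / 50)"
    using ratio_powr_le [of \<Delta> \<alpha>] assms(1) \<open>0 < \<alpha>\<close> \<open>\<alpha> \<le> 1 / 1000\<close>
    by (intro mult_right_mono) (auto simp: E_def x_def y_def)
  finally show ?thesis
    by simp
qed

end
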